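(* Let $\alpha$ be a countable ordinal and let $(x_n)_n$ be a bounded sequence in $X_\alpha$. Suppose there are $\varepsilon>0$, an ordinal $\beta<\alpha$ and a block sequence $(s_n)_n$ of elements of $\mathcal S_\beta$ (i.e. $\max s_n<\min s_{n+1}$) such that $\sum_{k\in s_n}|(x_n)_k|\ge\varepsilon$ for every $n$. Then $\{x_n\}_n$ is not a Banach-Saks set.
   Context: A subset $A$ of a Banach space is a Banach-Saks set if every sequence in $A$ has a subsequence whose Ces\`aro means converge in norm. For a family $\mathcal F$ of finite subsets of $\mathbb N$, $X_{\mathcal F}$ is the completion of $c_{00}(\mathbb N)$ under $\|x\|_{\mathcal F}=\max\{\|x\|_\infty,\sup_{s\in\mathcal F}\sum_{n\in s}|(x)_n|\}$, $(x)_k$ denoting the $k$-th coordinate. The Schreier family is $\mathcal S=\{s\subseteq\mathbb N: \#s\le\min s\}$; $\mathcal F\otimes\mathcal G=\{s_0\cup\dots\cup s_n: s_0<\dots<s_n \text{ in }\mathcal F,\ \{\min s_i\}_{i\le n}\in\mathcal G\}$ with $s<t$ meaning $\max s<\min t$. For each countable limit ordinal $\alpha$ a strictly increasing sequence $(\beta_n^{(\alpha)})_n$ with supremum $\alpha$ is fixed; $\mathcal S_0=\{s:\#s\le1\}$, $\mathcal S_{\alpha+1}=\mathcal S_\alpha\otimes\mathcal S$, and for limit $\alpha$, $\mathcal S_\alpha=\bigcup_n\{s\in\mathcal S_{\beta_n^{(\alpha)}}: s\subseteq[n+1,\infty)\}$. $X_\alpha:=X_{\mathcal S_\alpha}$.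 *)

theory Defs
  imports "HOL-Analysis.Analysis"
begin

text \<open>Vectors are real sequences indexed by nat. The norm is valued in ereal so that it
is defined (possibly infinite) for every sequence.\<close>

definition normF :: "nat set set \<Rightarrow> (nat \<Rightarrow> real) \<Rightarrow> ereal" where
  "normF F x = max (SUP k. ereal \<bar>x k\<bar>) (SUP s\<in>F. ereal (\<Sum>k\<in>s. \<bar>x k\<bar>))"

text \<open>Elements of the completion X_F of c00 under normF: sequences whose tails
(the part after the first n coordinates) tend to 0 in norm.\<close>

definition inX :: "nat set set \<Rightarrow> (nat \<Rightarrow> real) \<Rightarrow> bool" where
  "inX F x \<longleftrightarrow> ((\<lambda>n. normF F (\<lambda>k. if k < n then 0 else x k)) \<longlonglongrightarrow> 0)"

definition banach_saks_set :: "nat set set \<Rightarrow> (nat \<Rightarrow> real) set \<Rightarrow> bool" where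
  "banach_saks_set F A \<longleftrightarrow>
     (\<forall>f :: nat \<Rightarrow> nat \<Rightarrow> real. (\<forall>n. f n \<in> A) \<longrightarrow>
        (\<exists>\<phi> y. strict_mono \<phi> \<and> inX F y \<and>
           ((\<lambda>m. normF F (\<lambda>k. (\<Sum>i<Suc m. f (\<phi> i) k) / real (Suc m) - y k)) \<longlonglongrightarrow> 0)))"

definition schreier0 :: "nat set set" where
  "schreier0 = {s. finite s \<and> card s \<le> 1}"

definition schreier :: "nat set set" where
  "schreier = {s. finite s \<and> (s = {} \<or> card s \<le> Min s)}"

definition otimes :: "nat set set \<Rightarrow> nat set set \<Rightarrow> nat set set" where
  "otimes F G = {t. t = {} \<or>
     (\<exists>(n::nat) (ss :: nat \<Rightarrow> nat set).
        (\<forall>i\<le>n. ss i \<in> F \<and> ss i \<noteq> {}) \<and>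
        (\<forall>i<n. \<forall>a\<in>ss i. \<forall>b\<in>ss (Suc i). a < b) \<and>
        {Min (ss i) | i. i \<le> n} \<in> G \<and>
        t = (\<Union>i\<le>n. ss i))}"

definition is_zero_ord :: "'o::wellorder \<Rightarrow> bool" where
  "is_zero_ord a \<longleftrightarrow> (\<forall>g. \<not> g < a)"

definition is_succ_of :: "'o::wellorder \<Rightarrow> 'o \<Rightarrow> bool" where
  "is_succ_of a b \<longleftrightarrow> b < a \<and> \<not> (\<exists>g. b < g \<and> g < a)"

definition is_limit_ord :: "'o::wellorder \<Rightarrow> bool" where
  "is_limit_ord a \<longleftrightarrow> \<not> is_zero_ord a \<and> \<not> (\<exists>b. is_succ_of a b)"

text \<open>fs a is the fixed sequence (beta_n^(a))_n for a limit ordinal a.\<close>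

definition fund_seqs_ok :: "('o::wellorder \<Rightarrow> nat \<Rightarrow> 'o) \<Rightarrow> 'o \<Rightarrow> bool" where
  "fund_seqs_ok fs a \<longleftrightarrow>
     (\<forall>g\<le>a. is_limit_ord g \<longrightarrow>
        strict_mono (fs g) \<and> (\<forall>n. fs g n < g) \<and> (\<forall>d<g. \<exists>n. d < fs g n))"

definition schreier_step ::
  "('o::wellorder \<Rightarrow> nat \<Rightarrow> 'o) \<Rightarrow> ('o \<Rightarrow> nat set set) \<Rightarrow> 'o \<Rightarrow> nat set set" where
  "schreier_step fs S a =
     (if is_zero_ord a then schreier0
      else if (\<exists>b. is_succ_of a b) then otimes (S (THE b. is_succ_of a b)) schreier
      else (\<Union>n. {s \<in> S (fs a n). s \<subseteq> {Suc n..}}))"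

definition schreier_fam :: "('o::wellorder \<Rightarrow> nat \<Rightarrow> 'o) \<Rightarrow> 'o \<Rightarrow> nat set set" where
  "schreier_fam fs = wfrec {(x, y). x < y} (schreier_step fs)"

end

theory Submission
  imports Defs "HOL-Library.Diagonal_Subsequence"
begin

text \<open>
  Since the x_n are bounded, a subsequence converges coordinatewise to some z, and a further
  gliding-hump selection makes x_p nearly vanish on all later blocks s_q and x_q nearly equal to z
  on all earlier blocks s_p. A Cesaro limit y in X_\<alpha> of any subsequence must then equal z.
  Because \<beta> < \<alpha>, every set of S_\<beta> \<otimes> S beyond a fixed threshold belongs to S_\<alpha>; hence for large m
  the union U of the blocks m+1, ..., 2m+1 is an S_\<alpha>-set. On U the (2m+2)-th Cesaro mean differs
  from z by at least \<epsilon>/4 in total absolute value, whereas both this difference and the mass of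
  z on U tend to 0.
\<close>

section \<open>Schreier families\<close>

lemma is_succ_of_unique:
  fixes a b c :: "'o::wellorder"
  assumes "is_succ_of a b" "is_succ_of a c"
  shows "b = c"
  using assms unfolding is_succ_of_def by (metis linorder_neqE)

lemma schreier_fam_unfold:
  "schreier_fam fs a = schreier_step fs (cut (schreier_fam fs) {(x, y). x < y} a) a"
  unfolding schreier_fam_def by (rule wfrec[OF wf])

lemma schreier_fam_succ:
  assumes "is_succ_of a b"
  shows "schreier_fam fs a = otimes (schreier_fam fs b) schreier"
proof -
  have "\<not> is_zero_ord a" "b < a" using assms by (auto simp: is_zero_ord_def is_succ_of_def)
  moreover have "(THE b. is_succ_of a b) = b" using assms is_succ_of_unique by blast
  ultimately show ?thesis
    using assms by (subst schreier_fam_unfold) (auto simp: schreier_step_def cut_apply)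
qed

lemma schreier_fam_limit:
  assumes "fund_seqs_ok fs \<alpha>" "a \<le> \<alpha>" "is_limit_ord a"
  shows "schreier_fam fs a = (\<Union>n. {s \<in> schreier_fam fs (fs a n). s \<subseteq> {Suc n..}})"
proof -
  have "fs a n < a" for n using assms by (simp add: fund_seqs_ok_def)
  then show ?thesis
    using assms(3) unfolding is_limit_ord_def
    by (subst schreier_fam_unfold) (auto simp: schreier_step_def cut_apply)
qed

lemma union_in_otimes_schreier:
  fixes ss :: "nat \<Rightarrow> nat set"
  assumes sets: "\<And>i. i \<le> n \<Longrightarrow> ss i \<in> G \<and> finite (ss i) \<and> ss i \<noteq> {}"
    and successive: "\<And>i. i < n \<Longrightarrow> \<forall>a\<in>ss i. \<forall>b\<in>ss (Suc i). a < b"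
    and above: "\<And>i a. i \<le> n \<Longrightarrow> a \<in> ss i \<Longrightarrow> n < a"
  shows "(\<Union>i\<le>n. ss i) \<in> otimes G schreier"
proof -
  let ?M = "(\<lambda>i. Min (ss i)) ` {..n}"
  have "Min (ss i) \<in> ss i" if "i \<le> n" for i using sets that by simp
  then have "n < Min ?M" using above by auto
  moreover have "card ?M \<le> Suc n" using card_image_le[of "{..n}"] by simp
  ultimately have "?M \<in> schreier" unfolding schreier_def by (simp add: Suc_le_eq order_trans)
  moreover have "?M = {Min (ss i) | i. i \<le> n}" by auto
  ultimately show ?thesis
    unfolding otimes_def using sets successive by (intro CollectI disjI2 exI[of _ n] exI[of _ ss]) auto
qed

lemma set_in_otimes_schreier:
  assumes "u \<in> G" "finite u" "\<forall>a\<in>u. 0 < a"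
  shows "u \<in> otimes G schreier"
proof (cases "u = {}")
  case False
  then show ?thesis
    using union_in_otimes_schreier[of 0 "\<lambda>_. u" G] assms by simp
qed (simp add: otimes_def)

definition eventually_contains :: "nat set set \<Rightarrow> nat set set \<Rightarrow> bool" where
  "eventually_contains F G \<longleftrightarrow> (\<exists>N. \<forall>u\<in>G. finite u \<longrightarrow> (\<forall>a\<in>u. N \<le> a) \<longrightarrow> u \<in> F)"

lemma eventually_contains_refl: "eventually_contains F F"
  unfolding eventually_contains_def by blast

lemma eventually_contains_trans:
  assumes "eventually_contains F G" "eventually_contains G H"
  shows "eventually_contains F H"
proof -
  obtain N M where "\<forall>u\<in>G. finite u \<longrightarrow> (\<forall>a\<in>u. N \<le> a) \<longrightarrow> u \<in> F"
    and "\<forall>u\<in>H. finite u \<longrightarrow> (\<forall>a\<in>u. M \<le> a) \<longrightarrow> u \<in> G"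
    using assms unfolding eventually_contains_def by blast
  then have "\<forall>u\<in>H. finite u \<longrightarrow> (\<forall>a\<in>u. max N M \<le> a) \<longrightarrow> u \<in> F" by simp
  then show ?thesis unfolding eventually_contains_def by blast
qed

lemma eventually_contains_otimes_schreier: "eventually_contains (otimes G schreier) G"
  unfolding eventually_contains_def using set_in_otimes_schreier
  by (metis less_eq_Suc_le zero_less_Suc)

lemma schreier_fam_eventually_contains_otimes:
  fixes fs :: "'o::wellorder \<Rightarrow> nat \<Rightarrow> 'o"
  assumes ok: "fund_seqs_ok fs \<alpha>"
  shows "\<gamma> \<le> \<alpha> \<Longrightarrow> \<beta> < \<gamma> \<Longrightarrow>
    eventually_contains (schreier_fam fs \<gamma>) (otimes (schreier_fam fs \<beta>) schreier)"
proof (induction \<gamma> rule: less_induct)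
  case (less \<gamma>)
  show ?case
  proof (cases "\<exists>d. is_succ_of \<gamma> d")
    case True
    then obtain d where d: "is_succ_of \<gamma> d" by blast
    then have "\<beta> \<le> d" "d < \<gamma>"
      using less.prems(2) unfolding is_succ_of_def by (auto simp: not_less[symmetric])
    show ?thesis
    proof (cases "\<beta> = d")
      case True
      then show ?thesis using d by (simp add: schreier_fam_succ eventually_contains_refl)
    next
      case False
      then have "eventually_contains (schreier_fam fs d) (otimes (schreier_fam fs \<beta>) schreier)"
        using less.IH[OF \<open>d < \<gamma>\<close>] less.prems \<open>\<beta> \<le> d\<close> \<open>d < \<gamma>\<close> by simp
      then show ?thesis
        unfolding schreier_fam_succ[OF d] by (rule eventually_contains_trans[OF eventually_contains_otimes_schreier])
    qed
  next
    case False
    then have lim: "is_limit_ord \<gamma>"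
      using less.prems(2) by (auto simp: is_limit_ord_def is_zero_ord_def)
    then obtain n where n: "\<beta> < fs \<gamma> n" "fs \<gamma> n < \<gamma>"
      using ok less.prems unfolding fund_seqs_ok_def by blast
    have "eventually_contains (schreier_fam fs \<gamma>) (schreier_fam fs (fs \<gamma> n))"
      unfolding eventually_contains_def schreier_fam_limit[OF ok less.prems(1) lim]
      by (rule exI[of _ "Suc n"]) blast
    moreover have "eventually_contains (schreier_fam fs (fs \<gamma> n)) (otimes (schreier_fam fs \<beta>) schreier)"
      using less.IH[OF n(2)] less.prems n by simp
    ultimately show ?thesis by (rule eventually_contains_trans)
  qed
qed

section \<open>Block sequences and gliding humps\<close>

definition block_sequence :: "(nat \<Rightarrow> nat set) \<Rightarrow> bool" where
  "block_sequence T \<longleftrightarrow>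
     (\<forall>n. finite (T n) \<and> T n \<noteq> {}) \<and> (\<forall>p q. p < q \<longrightarrow> (\<forall>a\<in>T p. \<forall>b\<in>T q. a < b))"

lemma block_sequenceI:
  assumes "\<And>n. finite (T n)" "\<And>n. T n \<noteq> {}"
    and successive: "\<And>n. \<forall>a\<in>T n. \<forall>b\<in>T (Suc n). a < b"
  shows "block_sequence T"
proof -
  have "\<forall>a\<in>T p. \<forall>b\<in>T q. a < b" if "p < q" for p q
    using that
  proof (induction rule: less_Suc_induct)
    case (2 i j k)
    then show ?case using \<open>T j \<noteq> {}\<close> by (meson ex_in_conv order.strict_trans)
  qed (use successive in blast)
  then show ?thesis using assms unfolding block_sequence_def by blast
qed

lemma block_sequence_less:
  "block_sequence T \<Longrightarrow> p < q \<Longrightarrow> a \<in> T p \<Longrightarrow> b \<in> T q \<Longrightarrow> a < b"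
  unfolding block_sequence_def by blast

lemma block_sequence_ge_index:
  assumes "block_sequence T" "a \<in> T n"
  shows "n \<le> a"
  using assms(2)
proof (induction n arbitrary: a)
  case (Suc n)
  obtain c where "c \<in> T n" using assms(1) unfolding block_sequence_def by blast
  then show ?case using Suc block_sequence_less[OF assms(1), of n "Suc n" c a] by fastforce
qed simp

lemma block_sequence_subseq:
  assumes T: "block_sequence T" and r: "strict_mono r"
  shows "block_sequence (T \<circ> r)"
  unfolding block_sequence_def o_def
proof (intro conjI allI impI ballI)
  show "finite (T (r n))" "T (r n) \<noteq> {}" for n using T unfolding block_sequence_def by blast+
  show "a < b" if "p < q" "a \<in> T (r p)" "b \<in> T (r q)" for p q a b
    using block_sequence_less[OF T _ that(2,3)] r that(1) by (simp add: strict_mono_def)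
qed

lemma block_sequence_disjoint:
  assumes "block_sequence T" "p \<noteq> q"
  shows "T p \<inter> T q = {}"
  using assms(2) block_sequence_less[OF assms(1), of p q] block_sequence_less[OF assms(1), of q p]
  by (cases "p < q") auto

lemma block_sequence_union_in_otimes:
  assumes T: "block_sequence T" "\<And>n. T n \<in> G"
  shows "(\<Union>i\<le>m. T (Suc m + i)) \<in> otimes G schreier"
proof (rule union_in_otimes_schreier)
  show "T (Suc m + i) \<in> G \<and> finite (T (Suc m + i)) \<and> T (Suc m + i) \<noteq> {}" for i
    using T unfolding block_sequence_def by blast
  show "\<forall>a\<in>T (Suc m + i). \<forall>b\<in>T (Suc m + Suc i). a < b" for i
    using block_sequence_less[OF T(1), of "Suc m + i" "Suc m + Suc i"] by simp
  show "m < a" if "a \<in> T (Suc m + i)" for i a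
    using block_sequence_ge_index[OF T(1) that] by simp
qed

lemma block_sequence_eventually_in:
  assumes "eventually_contains F G" and T: "block_sequence T" "\<And>n. T n \<in> G"
  shows "\<forall>\<^sub>F n in sequentially. T n \<in> F"
proof -
  obtain N where N: "\<forall>u\<in>G. finite u \<longrightarrow> (\<forall>a\<in>u. N \<le> a) \<longrightarrow> u \<in> F"
    using assms(1) unfolding eventually_contains_def by blast
  have "T n \<in> F" if "N \<le> n" for n
    using N T that block_sequence_ge_index[OF T(1), of _ n] unfolding block_sequence_def
    by (meson order_trans)
  then show ?thesis unfolding eventually_sequentially by blast
qed

definition gliding_hump ::
    "real \<Rightarrow> (nat \<Rightarrow> nat \<Rightarrow> real) \<Rightarrow> (nat \<Rightarrow> real) \<Rightarrow> (nat \<Rightarrow> nat set) \<Rightarrow> bool" where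
  "gliding_hump c X z T \<longleftrightarrow> (\<forall>p q. p < q \<longrightarrow>
     (\<Sum>k\<in>T q. \<bar>X p k\<bar>) \<le> c * (1/2)^p \<and> (\<Sum>k\<in>T p. \<bar>X q k - z k\<bar>) \<le> c * (1/2)^q)"

lemma gliding_hump_nonneg:
  assumes "gliding_hump c X z T"
  shows "0 \<le> c"
proof -
  have "0 \<le> (\<Sum>k\<in>T 1. \<bar>X 0 k\<bar>)" by (simp add: sum_nonneg)
  also have "\<dots> \<le> c" using assms unfolding gliding_hump_def by fastforce
  finally show ?thesis .
qed

lemma gliding_hump_subseq:
  assumes hump: "gliding_hump c X z T" and r: "strict_mono r"
  shows "gliding_hump c (X \<circ> r) z (T \<circ> r)"
  unfolding gliding_hump_def o_def
proof (intro allI impI conjI)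
  have decay: "c * (1/2)^(r p) \<le> c * (1/2)^p" for p
    using gliding_hump_nonneg[OF hump] seq_suble[OF r, of p]
    by (intro mult_left_mono power_decreasing) auto
  fix p q :: nat
  assume "p < q"
  then have "r p < r q" using r by (simp add: strict_mono_def)
  then have "(\<Sum>k\<in>T (r q). \<bar>X (r p) k\<bar>) \<le> c * (1/2)^(r p)"
    and "(\<Sum>k\<in>T (r p). \<bar>X (r q) k - z k\<bar>) \<le> c * (1/2)^(r q)"
    using hump unfolding gliding_hump_def by blast+
  then show "(\<Sum>k\<in>T (r q). \<bar>X (r p) k\<bar>) \<le> c * (1/2)^p"
    and "(\<Sum>k\<in>T (r p). \<bar>X (r q) k - z k\<bar>) \<le> c * (1/2)^q"
    using decay[of p] decay[of q] by linarith+
qed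

lemma sum_le_half_powers:
  fixes f :: "nat \<Rightarrow> real"
  assumes "finite A" "0 \<le> c" "\<And>j. j \<in> A \<Longrightarrow> f j \<le> c * (1/2)^j"
  shows "sum f A \<le> 2 * c"
proof -
  have "(\<Sum>j\<in>A. (1/2::real)^j) \<le> (\<Sum>j. (1/2)^j)"
    using assms(1) by (intro sum_le_suminf summable_geometric) auto
  then have geometric: "(\<Sum>j\<in>A. (1/2::real)^j) \<le> 2"
    using suminf_geometric[of "1/2::real"] by simp
  have "sum f A \<le> c * (\<Sum>j\<in>A. (1/2)^j)"
    unfolding sum_distrib_left using assms(3) by (rule sum_mono)
  also have "\<dots> \<le> c * 2" using geometric assms(2) by (rule mult_left_mono)
  finally show ?thesis by simp
qed

lemma abs_sum_ge_single_term:
  fixes a :: "nat \<Rightarrow> real"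
  assumes "i \<le> M"
  shows "\<bar>\<Sum>j<Suc M. a j - c\<bar> \<ge>
    \<bar>a i\<bar> - (\<Sum>j<i. \<bar>a j\<bar>) - (\<Sum>j\<in>{i<..M}. \<bar>a j - c\<bar>) - real (Suc M) * \<bar>c\<bar>"
proof -
  have range: "{..<Suc M} = {..<i} \<union> insert i {i<..M}" using assms by auto
  have split: "(\<Sum>j<Suc M. a j - c) = (\<Sum>j<i. a j - c) + ((a i - c) + (\<Sum>j\<in>{i<..M}. a j - c))"
    unfolding range by (subst sum.union_disjoint) auto
  have "\<bar>\<Sum>j<i. a j - c\<bar> \<le> (\<Sum>j<i. \<bar>a j\<bar> + \<bar>c\<bar>)"
    by (rule order_trans[OF sum_abs sum_mono]) (simp add: abs_triangle_ineq4)
  moreover have "\<bar>\<Sum>j\<in>{i<..M}. a j - c\<bar> \<le> (\<Sum>j\<in>{i<..M}. \<bar>a j - c\<bar>)" by (rule sum_abs)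
  moreover have "real i * \<bar>c\<bar> + \<bar>c\<bar> \<le> real (Suc M) * \<bar>c\<bar>"
    using assms by (simp add: algebra_simps mult_left_mono)
  moreover have "(\<Sum>j<i. \<bar>a j\<bar> + \<bar>c\<bar>) = (\<Sum>j<i. \<bar>a j\<bar>) + real i * \<bar>c\<bar>"
    by (simp add: sum.distrib)
  moreover have "\<bar>a i - c\<bar> \<ge> \<bar>a i\<bar> - \<bar>c\<bar>" by simp
  ultimately show ?thesis unfolding split by linarith
qed

lemma gliding_hump_block_lower_bound:
  assumes hump: "gliding_hump c X z T" and "i \<le> M"
  shows "(\<Sum>k\<in>T i. \<bar>\<Sum>j<Suc M. X j k - z k\<bar>) \<ge>
    (\<Sum>k\<in>T i. \<bar>X i k\<bar>) - 4 * c - real (Suc M) * (\<Sum>k\<in>T i. \<bar>z k\<bar>)"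
proof -
  have c: "0 \<le> c" using gliding_hump_nonneg[OF hump] .
  have earlier: "(\<Sum>j<i. \<Sum>k\<in>T i. \<bar>X j k\<bar>) \<le> 2 * c"
    using hump unfolding gliding_hump_def by (intro sum_le_half_powers c) auto
  have later: "(\<Sum>j\<in>{i<..M}. \<Sum>k\<in>T i. \<bar>X j k - z k\<bar>) \<le> 2 * c"
    using hump unfolding gliding_hump_def by (intro sum_le_half_powers c) auto
  have "(\<Sum>k\<in>T i. \<bar>X i k\<bar>) - (\<Sum>j<i. \<Sum>k\<in>T i. \<bar>X j k\<bar>)
      - (\<Sum>j\<in>{i<..M}. \<Sum>k\<in>T i. \<bar>X j k - z k\<bar>) - real (Suc M) * (\<Sum>k\<in>T i. \<bar>z k\<bar>)
      = (\<Sum>k\<in>T i. \<bar>X i k\<bar> - (\<Sum>j<i. \<bar>X j k\<bar>) - (\<Sum>j\<in>{i<..M}. \<bar>X j k - z k\<bar>)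
      - real (Suc M) * \<bar>z k\<bar>)"
    by (simp add: sum_subtractf sum_distrib_left sum.swap[of _ "T i"])
  also have "\<dots> \<le> (\<Sum>k\<in>T i. \<bar>\<Sum>j<Suc M. X j k - z k\<bar>)"
    by (intro sum_mono abs_sum_ge_single_term[OF \<open>i \<le> M\<close>])
  finally show ?thesis using earlier later by linarith
qed

text \<open>The humps of the last m+1 of the 2m+2 averaged vectors lie in the union, and each
  contributes at least \<epsilon> - 4c there.\<close>

lemma gliding_hump_cesaro_lower_bound:
  fixes m :: nat
  defines "M \<equiv> m + Suc m"
  assumes hump: "gliding_hump c X z T" and T: "block_sequence T"
    and large: "\<And>n. \<epsilon> \<le> (\<Sum>k\<in>T n. \<bar>X n k\<bar>)"
  shows "(\<Sum>k\<in>(\<Union>i\<le>m. T (Suc m + i)). \<bar>(\<Sum>j<Suc M. X j k) / real (Suc M) - z k\<bar>)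
    \<ge> \<epsilon> / 2 - 2 * c - (\<Sum>k\<in>(\<Union>i\<le>m. T (Suc m + i)). \<bar>z k\<bar>)"
proof -
  let ?U = "\<Union>i\<le>m. T (Suc m + i)"
  have sum_U: "(\<Sum>k\<in>?U. g k) = (\<Sum>i\<le>m. \<Sum>k\<in>T (Suc m + i). g k)" for g :: "nat \<Rightarrow> real"
  proof (rule sum.UNION_disjoint)
    show "\<forall>i\<in>{..m}. finite (T (Suc m + i))" using T unfolding block_sequence_def by blast
    show "\<forall>i\<in>{..m}. \<forall>j\<in>{..m}. i \<noteq> j \<longrightarrow> T (Suc m + i) \<inter> T (Suc m + j) = {}"
      using block_sequence_disjoint[OF T] by simp
  qed simp
  have mean: "\<bar>(\<Sum>j<Suc M. X j k) / real (Suc M) - z k\<bar> = \<bar>\<Sum>j<Suc M. X j k - z k\<bar> / real (Suc M)"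
    for k by (simp add: sum_subtractf field_simps)
  have "(\<Sum>i\<le>m. \<epsilon> - 4 * c - real (Suc M) * (\<Sum>k\<in>T (Suc m + i). \<bar>z k\<bar>))
      \<le> (\<Sum>k\<in>?U. \<bar>\<Sum>j<Suc M. X j k - z k\<bar>)"
    unfolding sum_U
  proof (rule sum_mono)
    fix i assume "i \<in> {..m}"
    then have "Suc m + i \<le> M" by (simp add: M_def)
    from gliding_hump_block_lower_bound[OF hump this] large[of "Suc m + i"]
    show "\<epsilon> - 4 * c - real (Suc M) * (\<Sum>k\<in>T (Suc m + i). \<bar>z k\<bar>)
        \<le> (\<Sum>k\<in>T (Suc m + i). \<bar>\<Sum>j<Suc M. X j k - z k\<bar>)" by linarith
  qed
  also have "(\<Sum>i\<le>m. \<epsilon> - 4 * c - real (Suc M) * (\<Sum>k\<in>T (Suc m + i). \<bar>z k\<bar>))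
      = real (Suc m) * (\<epsilon> - 4 * c) - real (Suc M) * (\<Sum>k\<in>?U. \<bar>z k\<bar>)"
    using sum_U[of "\<lambda>k. \<bar>z k\<bar>"] by (simp add: sum_subtractf sum_distrib_left[symmetric])
  also have "\<dots> = real (Suc M) * (\<epsilon> / 2 - 2 * c - (\<Sum>k\<in>?U. \<bar>z k\<bar>))"
    by (simp add: M_def algebra_simps)
  finally show ?thesis
    unfolding mean sum_divide_distrib[symmetric] by (simp add: field_simps)
qed

section \<open>Norm and coordinatewise convergence\<close>

lemma abs_le_normF: "ereal \<bar>v k\<bar> \<le> normF F v"
  unfolding normF_def by (rule max.coboundedI1) (rule SUP_upper, simp)

lemma sum_abs_le_normF: "t \<in> F \<Longrightarrow> ereal (\<Sum>k\<in>t. \<bar>v k\<bar>) \<le> normF F v"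
  unfolding normF_def by (rule max.coboundedI2) (rule SUP_upper)

lemma normF_tendsto_zero_imp_coordinate:
  assumes "(\<lambda>m. normF F (w m)) \<longlonglongrightarrow> 0"
  shows "(\<lambda>m. w m k) \<longlonglongrightarrow> 0"
proof -
  have "(\<lambda>m. ereal \<bar>w m k\<bar>) \<longlonglongrightarrow> 0"
    by (rule tendsto_sandwich[of "\<lambda>_. 0" _ _ "\<lambda>m. normF F (w m)"]) (use assms abs_le_normF in auto)
  then have "(\<lambda>m. \<bar>w m k\<bar>) \<longlonglongrightarrow> 0" by (simp add: zero_ereal_def)
  then show ?thesis by (simp add: tendsto_rabs_zero_iff)
qed

lemma inX_tail_small:
  assumes "inX F v" "0 < \<delta>"
  obtains L where "\<And>t. t \<in> F \<Longrightarrow> \<forall>a\<in>t. L \<le> a \<Longrightarrow> (\<Sum>k\<in>t. \<bar>v k\<bar>) < \<delta>"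
proof -
  have "\<forall>\<^sub>F n in sequentially. normF F (\<lambda>k. if k < n then 0 else v k) < ereal \<delta>"
    using assms unfolding inX_def by (intro order_tendstoD(2)) auto
  then obtain L where L: "normF F (\<lambda>k. if k < L then 0 else v k) < ereal \<delta>"
    by (auto simp: eventually_sequentially)
  have "(\<Sum>k\<in>t. \<bar>v k\<bar>) < \<delta>" if "t \<in> F" "\<forall>a\<in>t. L \<le> a" for t
  proof -
    have "(\<Sum>k\<in>t. \<bar>v k\<bar>) = (\<Sum>k\<in>t. \<bar>if k < L then 0 else v k\<bar>)"
      using that(2) by (intro sum.cong) auto
    moreover have "ereal (\<Sum>k\<in>t. \<bar>if k < L then 0 else v k\<bar>) < ereal \<delta>"
      using sum_abs_le_normF[OF that(1)] L by (rule le_less_trans)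
    ultimately show ?thesis by simp
  qed
  then show ?thesis using that by blast
qed

lemma cesaro_mean_tendsto:
  fixes u :: "nat \<Rightarrow> real"
  assumes "u \<longlonglongrightarrow> L"
  shows "(\<lambda>m. (\<Sum>i<Suc m. u i) / real (Suc m)) \<longlonglongrightarrow> L"
proof -
  define v where "v i = u i - L" for i
  have v: "v \<longlonglongrightarrow> 0" using assms unfolding v_def by (simp add: LIM_zero)
  have mean: "(\<Sum>i<Suc m. u i) / real (Suc m) = L + (\<Sum>i<Suc m. v i) / real (Suc m)" for m
    by (simp add: v_def sum_subtractf field_simps)
  have "(\<lambda>m. (\<Sum>i<Suc m. v i) / real (Suc m)) \<longlonglongrightarrow> 0"
  proof (rule LIMSEQ_I)
    fix e :: real assume e: "0 < e"
    obtain N where N: "\<forall>i\<ge>N. \<bar>v i\<bar> < e/2" using LIMSEQ_D[OF v, of "e/2"] e by auto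
    define C where "C = (\<Sum>i<N. \<bar>v i\<bar>)"
    obtain K :: nat where K: "2 * C / e < real K" using reals_Archimedean2 by blast
    have "\<bar>(\<Sum>i<Suc m. v i) / real (Suc m)\<bar> < e" if m: "max N K \<le> m" for m
    proof -
      have split: "{..<Suc m} = {..<N} \<union> {N..<Suc m}" using m by auto
      have "\<bar>\<Sum>i<Suc m. v i\<bar> \<le> (\<Sum>i<Suc m. \<bar>v i\<bar>)" by (rule sum_abs)
      also have "\<dots> = C + (\<Sum>i\<in>{N..<Suc m}. \<bar>v i\<bar>)"
        unfolding split C_def by (rule sum.union_disjoint) auto
      also have "(\<Sum>i\<in>{N..<Suc m}. \<bar>v i\<bar>) \<le> (\<Sum>i\<in>{N..<Suc m}. e/2)"
        using N by (intro sum_mono) auto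
      also have "\<dots> \<le> real (Suc m) * (e/2)" using e by simp
      finally have "\<bar>\<Sum>i<Suc m. v i\<bar> \<le> C + real (Suc m) * (e/2)" by simp
      have "2 * C < e * real K" using K e by (simp add: field_simps)
      also have "\<dots> \<le> e * real (Suc m)" using m e by simp
      finally have "C < real (Suc m) * (e/2)" by (simp add: algebra_simps)
      with \<open>\<bar>\<Sum>i<Suc m. v i\<bar> \<le> C + real (Suc m) * (e/2)\<close> show ?thesis
        by (simp add: divide_less_eq mult.commute)
    qed
    then show "\<exists>no. \<forall>m\<ge>no. norm ((\<Sum>i<Suc m. v i) / real (Suc m) - 0) < e"
      by (metis real_norm_def diff_zero)
  qed
  then show ?thesis unfolding mean using tendsto_add[of "\<lambda>_. L" L] by fastforce
qed

lemma bounded_imp_coordinatewise_convergent_subseq: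
  fixes x :: "nat \<Rightarrow> nat \<Rightarrow> real"
  assumes bounded: "\<forall>n k. \<bar>x n k\<bar> \<le> B"
  obtains \<psi> z where "strict_mono \<psi>" "\<And>k. (\<lambda>n. x (\<psi> n) k) \<longlonglongrightarrow> z k"
proof -
  interpret S: subseqs "\<lambda>k r. \<exists>l. (\<lambda>i. x (r i) k) \<longlonglongrightarrow> l"
  proof unfold_locales
    fix k and s :: "nat \<Rightarrow> nat"
    have "bounded (range (\<lambda>i. x (s i) k))" unfolding bounded_iff using bounded by auto
    then obtain l r where "strict_mono (r :: nat \<Rightarrow> nat)" "((\<lambda>i. x (s i) k) \<circ> r) \<longlonglongrightarrow> l"
      using bounded_imp_convergent_subsequence by blast
    then show "\<exists>r'. strict_mono r' \<and> (\<exists>l. (\<lambda>i. x ((s \<circ> r') i) k) \<longlonglongrightarrow> l)"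
      by (auto simp: o_def)
  qed
  have "\<forall>k. \<exists>l. (\<lambda>n. x (S.diagseq n) k) \<longlonglongrightarrow> l"
  proof
    fix k
    have "\<exists>l. (\<lambda>i. x ((S.diagseq \<circ> (+) (Suc k)) i) k) \<longlonglongrightarrow> l"
    proof (rule S.diagseq_holds)
      fix r s n
      assume "strict_mono (r :: nat \<Rightarrow> nat)" "\<exists>l. (\<lambda>i. x (s i) n) \<longlonglongrightarrow> l"
      then obtain l where "(\<lambda>i. x (s i) n) \<longlonglongrightarrow> l" by blast
      from LIMSEQ_subseq_LIMSEQ[OF this \<open>strict_mono r\<close>]
      show "\<exists>l. (\<lambda>i. x ((s \<circ> r) i) n) \<longlonglongrightarrow> l" by (auto simp: o_def)
    qed
    then obtain l where "(\<lambda>i. x (S.diagseq (i + Suc k)) k) \<longlonglongrightarrow> l" by (auto simp: o_def add.commute)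
    then have "(\<lambda>i. x (S.diagseq i) k) \<longlonglongrightarrow> l" by (rule LIMSEQ_offset)
    then show "\<exists>l. (\<lambda>n. x (S.diagseq n) k) \<longlonglongrightarrow> l" by blast
  qed
  then obtain z where "\<forall>k. (\<lambda>n. x (S.diagseq n) k) \<longlonglongrightarrow> z k" by (rule choice[THEN exE])
  then show ?thesis using that S.subseq_diagseq by blast
qed

lemma inX_eventually_small_on_blocks:
  assumes v: "inX F v" and T: "block_sequence T" and TF: "\<forall>\<^sub>F n in sequentially. T n \<in> F"
    and \<delta>: "0 < \<delta>"
  shows "\<forall>\<^sub>F n in sequentially. (\<Sum>k\<in>T n. \<bar>v k\<bar>) \<le> \<delta>"
proof -
  obtain L where L: "\<And>t. t \<in> F \<Longrightarrow> \<forall>a\<in>t. L \<le> a \<Longrightarrow> (\<Sum>k\<in>t. \<bar>v k\<bar>) < \<delta>"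
    using inX_tail_small[OF v \<delta>] by blast
  have "\<forall>\<^sub>F n in sequentially. \<forall>a\<in>T n. L \<le> a"
    using eventually_ge_at_top[of L]
    by eventually_elim (meson block_sequence_ge_index[OF T] order_trans)
  with TF show ?thesis by eventually_elim (use L in fastforce)
qed

lemma eventually_sum_abs_diff_le:
  fixes X :: "nat \<Rightarrow> 'a \<Rightarrow> real"
  assumes "\<And>k. (\<lambda>n. X n k) \<longlonglongrightarrow> z k" "0 < \<delta>"
  shows "\<forall>\<^sub>F n in sequentially. (\<Sum>k\<in>t. \<bar>X n k - z k\<bar>) \<le> \<delta>"
proof -
  have "(\<lambda>n. \<Sum>k\<in>t. \<bar>X n k - z k\<bar>) \<longlonglongrightarrow> 0"
    by (intro tendsto_null_sum tendsto_rabs_zero) (simp add: LIM_zero assms(1))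
  from order_tendstoD(2)[OF this assms(2)] show ?thesis by (rule eventually_mono) simp
qed

lemma gliding_hump_subseq_exists:
  assumes c: "0 < c" and conv: "\<And>k. (\<lambda>n. X n k) \<longlonglongrightarrow> z k" and X: "\<And>n. inX F (X n)"
    and T: "block_sequence T" and TF: "\<forall>\<^sub>F n in sequentially. T n \<in> F"
  obtains r where "strict_mono r" "gliding_hump c (X \<circ> r) z (T \<circ> r)"
proof -
  \<comment> \<open>The index r (q+1) is chosen so that each X p with p \<le> r q has mass at most c/2^p on
    T (r (q+1)), and X (r (q+1)) is c/2^(q+1)-close to z on each T p with p \<le> r q.\<close>
  define Q where "Q q m n \<longleftrightarrow> (\<forall>p\<in>{..m}. (\<Sum>k\<in>T n. \<bar>X p k\<bar>) \<le> c * (1/2)^p \<and>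
      (\<Sum>k\<in>T p. \<bar>X n k - z k\<bar>) \<le> c * (1/2)^Suc q)" for q m n
  have "\<forall>\<^sub>F n in sequentially. m < n \<and> Q q m n" for q m
    unfolding Q_def using c
    by (intro eventually_conj eventually_gt_at_top eventually_ball_finite ballI
        inX_eventually_small_on_blocks[OF X T TF] eventually_sum_abs_diff_le[OF conv]) auto
  then have step: "\<exists>n. m < n \<and> Q q m n" for q m
    by (simp add: eventually_sequentially) (meson le_refl)
  define r where "r = rec_nat 0 (\<lambda>q rq. SOME n. rq < n \<and> Q q rq n)"
  have r_step: "r q < r (Suc q) \<and> Q q (r q) (r (Suc q))" for q
    unfolding r_def using someI_ex[OF step] by simp
  then have r: "strict_mono r" by (simp add: strict_mono_Suc_iff)
  have "gliding_hump c (X \<circ> r) z (T \<circ> r)"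
    unfolding gliding_hump_def o_def
  proof (intro allI impI conjI)
    fix p q :: nat
    assume "p < q"
    then obtain q0 where q0: "q = Suc q0" "p \<le> q0" by (cases q) auto
    then have "r p \<in> {..r q0}" using r by (simp add: strict_mono_less_eq)
    then have "(\<Sum>k\<in>T (r q). \<bar>X (r p) k\<bar>) \<le> c * (1/2)^(r p)"
      and earlier: "(\<Sum>k\<in>T (r p). \<bar>X (r q) k - z k\<bar>) \<le> c * (1/2)^q"
      using r_step[of q0] q0(1) unfolding Q_def by auto
    moreover have "c * (1/2)^(r p) \<le> c * (1/2)^p"
      using c seq_suble[OF r, of p] by (intro mult_left_mono power_decreasing) auto
    ultimately show "(\<Sum>k\<in>T (r q). \<bar>X (r p) k\<bar>) \<le> c * (1/2)^p" by linarith
    show "(\<Sum>k\<in>T (r p). \<bar>X (r q) k - z k\<bar>) \<le> c * (1/2)^q" by (fact earlier)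
  qed
  with r show ?thesis using that by blast
qed

lemma normF_cesaro_limit_eq:
  assumes lim: "(\<lambda>m. normF F (\<lambda>k. (\<Sum>i<Suc m. X i k) / real (Suc m) - y k)) \<longlonglongrightarrow> 0"
    and conv: "\<And>k. (\<lambda>n. X n k) \<longlonglongrightarrow> z k"
  shows "y = z"
proof
  fix k
  have "(\<lambda>m. (\<Sum>i<Suc m. X i k) / real (Suc m) - y k) \<longlonglongrightarrow> 0"
    by (rule normF_tendsto_zero_imp_coordinate[OF lim])
  moreover have "(\<lambda>m. (\<Sum>i<Suc m. X i k) / real (Suc m) - y k) \<longlonglongrightarrow> z k - y k"
    by (intro tendsto_diff cesaro_mean_tendsto conv tendsto_const)
  ultimately show "y k = z k" using LIMSEQ_unique by fastforce
qed

lemma cesaro_means_not_tendsto: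
  assumes contains: "eventually_contains F (otimes G schreier)"
    and T: "block_sequence T" "\<And>n. T n \<in> G"
    and hump: "gliding_hump (\<epsilon> / 8) X z T"
    and large: "\<And>n. \<epsilon> \<le> (\<Sum>k\<in>T n. \<bar>X n k\<bar>)" and \<epsilon>: "0 < \<epsilon>"
    and conv: "\<And>k. (\<lambda>n. X n k) \<longlonglongrightarrow> z k" and y: "inX F y"
  shows "\<not> (\<lambda>m. normF F (\<lambda>k. (\<Sum>i<Suc m. X i k) / real (Suc m) - y k)) \<longlonglongrightarrow> 0"
proof
  define mean where "mean m k = (\<Sum>i<Suc m. X i k) / real (Suc m)" for m k
  assume lim: "(\<lambda>m. normF F (\<lambda>k. (\<Sum>i<Suc m. X i k) / real (Suc m) - y k)) \<longlonglongrightarrow> 0"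
  then have y_eq: "y = z" using conv by (rule normF_cesaro_limit_eq)
  define \<delta> where "\<delta> = \<epsilon> / 16"
  have \<delta>: "0 < \<delta>" using \<epsilon> by (simp add: \<delta>_def)
  obtain m1 where m1: "\<And>m. m \<ge> m1 \<Longrightarrow> normF F (\<lambda>k. mean m k - z k) < ereal \<delta>"
    using order_tendstoD(2)[OF lim, of "ereal \<delta>"] \<delta> y_eq
    by (auto simp: eventually_sequentially zero_ereal_def mean_def)
  obtain L where L: "\<And>t. t \<in> F \<Longrightarrow> \<forall>a\<in>t. L \<le> a \<Longrightarrow> (\<Sum>k\<in>t. \<bar>z k\<bar>) < \<delta>"
    using inX_tail_small[OF y \<delta>] y_eq by blast
  obtain N where N: "\<And>u. u \<in> otimes G schreier \<Longrightarrow> finite u \<Longrightarrow> \<forall>a\<in>u. N \<le> a \<Longrightarrow> u \<in> F"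
    using contains unfolding eventually_contains_def by blast
  define m where "m = max m1 (max L N)"
  define U where "U = (\<Union>i\<le>m. T (Suc m + i))"
  have above: "m < a" if "a \<in> U" for a
    using that block_sequence_ge_index[OF T(1)] unfolding U_def by fastforce
  have "U \<in> otimes G schreier"
    unfolding U_def using T by (rule block_sequence_union_in_otimes)
  moreover have "finite U" using T(1) unfolding U_def block_sequence_def by blast
  ultimately have "U \<in> F" using N above unfolding m_def by fastforce
  then have "(\<Sum>k\<in>U. \<bar>z k\<bar>) < \<delta>" using L above unfolding m_def by fastforce
  moreover have "(\<Sum>k\<in>U. \<bar>mean (m + Suc m) k - z k\<bar>) < \<delta>"
    using le_less_trans[OF sum_abs_le_normF[OF \<open>U \<in> F\<close>] m1[of "m + Suc m"]] by (simp add: m_def)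
  moreover have "\<epsilon> / 2 - 2 * (\<epsilon> / 8) - (\<Sum>k\<in>U. \<bar>z k\<bar>) \<le> (\<Sum>k\<in>U. \<bar>mean (m + Suc m) k - z k\<bar>)"
    unfolding U_def mean_def by (rule gliding_hump_cesaro_lower_bound[OF hump T(1) large])
  ultimately show False using \<epsilon> unfolding \<delta>_def by linarith
qed

lemma not_banach_saks_set_of_large_blocks:
  assumes contains: "eventually_contains F (otimes G schreier)"
    and x: "\<And>n. inX F (x n)" and bounded: "\<forall>n k. \<bar>x n k\<bar> \<le> B"
    and \<epsilon>: "0 < \<epsilon>" and s: "block_sequence s" "\<And>n. s n \<in> G"
    and large: "\<And>n. \<epsilon> \<le> (\<Sum>k\<in>s n. \<bar>x n k\<bar>)"
  shows "\<not> banach_saks_set F (range x)"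
proof
  assume BS: "banach_saks_set F (range x)"
  obtain \<psi> z where \<psi>: "strict_mono \<psi>" and conv: "\<And>k. (\<lambda>n. x (\<psi> n) k) \<longlonglongrightarrow> z k"
    using bounded_imp_coordinatewise_convergent_subseq[OF bounded] by blast
  have s\<psi>: "block_sequence (s \<circ> \<psi>)" using block_sequence_subseq[OF s(1) \<psi>] .
  have "\<forall>\<^sub>F n in sequentially. (s \<circ> \<psi>) n \<in> F"
    using eventually_contains_trans[OF contains eventually_contains_otimes_schreier] s\<psi>
    by (rule block_sequence_eventually_in) (simp add: s(2))
  then obtain r where r: "strict_mono r"
    and hump: "gliding_hump (\<epsilon> / 8) (x \<circ> \<psi> \<circ> r) z (s \<circ> \<psi> \<circ> r)"
    using gliding_hump_subseq_exists[of "\<epsilon> / 8" "x \<circ> \<psi>" z F "s \<circ> \<psi>"] \<epsilon> conv x s\<psi> by auto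
  obtain \<phi> y where \<phi>: "strict_mono \<phi>" and y: "inX F y"
    and lim: "(\<lambda>m. normF F (\<lambda>k. (\<Sum>i<Suc m. (x \<circ> \<psi> \<circ> r) (\<phi> i) k) / real (Suc m) - y k)) \<longlonglongrightarrow> 0"
    using BS unfolding banach_saks_set_def by (auto dest: spec[of _ "x \<circ> \<psi> \<circ> r"])
  have "\<not> (\<lambda>m. normF F (\<lambda>k. (\<Sum>i<Suc m. (x \<circ> \<psi> \<circ> r \<circ> \<phi>) i k) / real (Suc m) - y k))
      \<longlonglongrightarrow> 0"
  proof (rule cesaro_means_not_tendsto[OF contains _ _ gliding_hump_subseq[OF hump \<phi>] _ \<epsilon> _ y])
    show "block_sequence (s \<circ> \<psi> \<circ> r \<circ> \<phi>)"
      by (intro block_sequence_subseq s\<psi> r \<phi>)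
    show "(s \<circ> \<psi> \<circ> r \<circ> \<phi>) n \<in> G" for n using s(2) by simp
    show "\<epsilon> \<le> (\<Sum>k\<in>(s \<circ> \<psi> \<circ> r \<circ> \<phi>) n. \<bar>(x \<circ> \<psi> \<circ> r \<circ> \<phi>) n k\<bar>)" for n using large by simp
    show "(\<lambda>n. (x \<circ> \<psi> \<circ> r \<circ> \<phi>) n k) \<longlonglongrightarrow> z k" for k
      using LIMSEQ_subseq_LIMSEQ[OF conv strict_mono_o[OF r \<phi>]] by (simp add: o_def)
  qed
  then show False using lim by (simp add: o_def)
qed

theorem proposition3p8:
  fixes fs :: "'o::wellorder \<Rightarrow> nat \<Rightarrow> 'o"
    and \<alpha> \<beta> :: "'o"
    and x :: "nat \<Rightarrow> nat \<Rightarrow> real"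
    and s :: "nat \<Rightarrow> nat set"
    and \<epsilon> :: real
  assumes countable_alpha: "countable {g. g \<le> \<alpha>}"
    and fs_ok: "fund_seqs_ok fs \<alpha>"
    and x_in: "\<forall>n. inX (schreier_fam fs \<alpha>) (x n)"
    and x_bdd: "\<exists>M::real. \<forall>n. normF (schreier_fam fs \<alpha>) (x n) \<le> ereal M"
    and eps_pos: "\<epsilon> > 0"
    and beta_less: "\<beta> < \<alpha>"
    and s_in: "\<forall>n. s n \<in> schreier_fam fs \<beta>"
    and s_block: "\<forall>n. \<forall>a\<in>s n. \<forall>b\<in>s (Suc n). a < b"
    and s_big: "\<forall>n. (\<Sum>k\<in>s n. \<bar>x n k\<bar>) \<ge> \<epsilon>"
  shows "\<not> banach_saks_set (schreier_fam fs \<alpha>) (range x)"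
proof -
  obtain B where "\<forall>n. normF (schreier_fam fs \<alpha>) (x n) \<le> ereal B" using x_bdd by blast
  then have bounded: "\<forall>n k. \<bar>x n k\<bar> \<le> B" using abs_le_normF by (metis ereal_less_eq(3) order_trans)
  have "finite (s n) \<and> s n \<noteq> {}" for n
    using s_big eps_pos by (metis not_le sum.empty sum.infinite)
  then have "block_sequence s" using s_block by (intro block_sequenceI) auto
  then show ?thesis
    using not_banach_saks_set_of_large_blocks[OF
        schreier_fam_eventually_contains_otimes[OF fs_ok order_refl beta_less]]
      x_in bounded eps_pos s_in s_big by blast
qed

end
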